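(* Let $q=2^m$, let $k\in\mathbb{F}_q$ with $Tr(k)=1$, let $i\in\mathbb{F}_{q^2}\setminus\mathbb{F}_q$ with $i^2=i+k$, and let $\alpha=A+iB$, $\beta=C+iD$ with $A,B,C,D\in\mathbb{F}_q$ and $\alpha\beta\neq 0$. Then the following are equivalent: (i) $m$ is odd, $C=A+B+1$, $D=B$, $A^2+AB+B^2k+B=0$, and $B\neq 0$; (ii) $\beta=\alpha^{q-1}\in\mathbb{F}_{q^2}\setminus\mathbb{F}_q$, $Tr\left(1+\frac{1}{\alpha^{q+1}}\right)=0$, and $\alpha+\alpha^q=\beta+\beta^q$.
   Context: $Tr:\mathbb{F}_q\to\mathbb{F}_2$ is the absolute trace $Tr(z)=z+z^2+\cdots+z^{2^{m-1}}$. *)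

theory Defs
  imports Main
begin

definition subfield_q :: "nat \<Rightarrow> ('a::field) set" where
  "subfield_q m = {x. x ^ (2 ^ m) = x}"

text \<open>Absolute trace Tr(z) = z + z^2 + ... + z^(2^(m-1)), computed in the ambient field
  (its value lies in the prime field {0,1}).\<close>
definition abs_trace :: "nat \<Rightarrow> 'a::field \<Rightarrow> 'a" where
  "abs_trace m z = (\<Sum>j<m. z ^ (2 ^ j))"

end

theory Submission
  imports Defs "HOL-Number_Theory.Residues"
begin

text \<open>The roots i and i + 1 of X^2 + X + k are Frobenius conjugates, so \<alpha> = A + iB has
  conjugate \<alpha>^q = (A + B) + iB, trace \<alpha> + \<alpha>^q = B and norm \<alpha>^(q+1) = A^2 + AB + kB^2.
  Hence \<alpha> + \<alpha>^q = \<beta> + \<beta>^q means D = B, \<beta> \<notin> F_q means D \<noteq> 0, and comparing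
  coordinates in \<beta>\<alpha> = \<alpha>^q gives C = A + B + 1 and norm \<alpha> = B. Finally
  1/B = x^2 + x + k with x = A/B, so Tr(1/B) = Tr(k) = 1 and Tr(1 + 1/\<alpha>^(q+1)) = m + 1,
  which vanishes exactly for odd m.\<close>

lemma CHAR_eq_2_of_card_power_2:
  assumes "card (UNIV :: 'a::field set) = 2 ^ n"
  shows "CHAR('a) = 2"
proof -
  have "finite (UNIV :: 'a set)"
    using assms card_ge_0_finite by force
  then have "prime CHAR('a)"
    by (intro prime_CHAR_semidom finite_imp_CHAR_pos)
  moreover have "CHAR('a) dvd 2 ^ n"
    using CHAR_dvd_CARD[where 'a = 'a] assms by simp
  ultimately show ?thesis
    by (metis prime_dvd_power primes_dvd_imp_eq two_is_prime_nat)
qed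

lemma add_eq_0_iff_eq_CHAR_2:
  fixes x y :: "'a::ring_1"
  assumes "CHAR('a) = 2"
  shows "x + y = 0 \<longleftrightarrow> x = y"
  using uminus_CHAR_2[OF assms, of y] by (metis eq_neg_iff_add_eq_0)

lemma frobenius_add_CHAR_2:
  fixes x y :: "'a::comm_semiring_1"
  assumes "CHAR('a) = 2"
  shows "(x + y) ^ 2 ^ m = x ^ 2 ^ m + y ^ 2 ^ m"
  using assms by (intro freshmans_dream') simp_all

lemma subfield_q_zero: "0 \<in> subfield_q m"
  by (simp add: subfield_q_def)

lemma subfield_q_add:
  fixes x y :: "'a::field"
  assumes "CHAR('a) = 2" "x \<in> subfield_q m" "y \<in> subfield_q m"
  shows "x + y \<in> subfield_q m"
  using assms by (simp add: subfield_q_def frobenius_add_CHAR_2)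

lemma subfield_q_mult: "x \<in> subfield_q m \<Longrightarrow> y \<in> subfield_q m \<Longrightarrow> x * y \<in> subfield_q m"
  by (simp add: subfield_q_def power_mult_distrib)

lemma subfield_q_divide: "x \<in> subfield_q m \<Longrightarrow> y \<in> subfield_q m \<Longrightarrow> x / y \<in> subfield_q m"
  by (simp add: subfield_q_def power_divide)

lemma abs_trace_one: "abs_trace m (1::'a::field) = of_nat m"
  by (simp add: abs_trace_def)

lemma abs_trace_add:
  fixes x y :: "'a::field"
  assumes "CHAR('a) = 2"
  shows "abs_trace m (x + y) = abs_trace m x + abs_trace m y"
  using assms by (simp add: abs_trace_def frobenius_add_CHAR_2 sum.distrib)

lemma abs_trace_square_add_self:
  fixes x :: "'a::field"
  assumes "CHAR('a) = 2" "x \<in> subfield_q m"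
  shows "abs_trace m (x ^ 2 + x) = 0"
proof -
  have "abs_trace m (x ^ 2 + x) = (\<Sum>j<m. x ^ 2 ^ Suc j - x ^ 2 ^ j)"
    unfolding abs_trace_def
  proof (rule sum.cong)
    fix j
    have "(x ^ 2) ^ 2 ^ j = x ^ 2 ^ Suc j"
      by (simp flip: power_mult add: mult.commute)
    then show "(x ^ 2 + x) ^ 2 ^ j = x ^ 2 ^ Suc j - x ^ 2 ^ j"
      using assms(1) by (simp add: frobenius_add_CHAR_2 minus_CHAR_2)
  qed simp
  also have "\<dots> = x ^ 2 ^ m - x"
    by (subst sum_lessThan_telescope) simp
  finally show ?thesis
    using assms(2) by (simp add: subfield_q_def)
qed

locale char2_quadratic_extension =
  fixes m :: nat and k i :: "'a::field"
  assumes CHAR_2: "CHAR('a) = 2"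
    and k_in: "k \<in> subfield_q m"
    and i_notin: "i \<notin> subfield_q m"
    and i_square: "i ^ 2 = i + k"
begin

lemma two_eq_zero: "(2::'a) = 0"
  using of_nat_CHAR[where 'a = 'a] CHAR_2 by simp

lemma frobenius_i: "i ^ 2 ^ m = i + 1"
proof -
  define s where "s = i ^ 2 ^ m"
  have "s ^ 2 = (i ^ 2) ^ 2 ^ m"
    by (simp add: s_def flip: power_mult add: mult.commute)
  also have "\<dots> = s + k"
    using k_in CHAR_2 by (simp add: i_square s_def subfield_q_def frobenius_add_CHAR_2)
  finally have s_square: "s ^ 2 = s + k" .
  txt \<open>Both s and i are roots of X^2 + X + k = (X + i)(X + i + 1), and s \<noteq> i.\<close>
  have "(s + i) * (s + i + 1) = (s ^ 2 - s - k) + (i ^ 2 - i - k) + 2 * (s * i + s + i + k)"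
    by (simp add: algebra_simps power2_eq_square)
  then have "(s + i) * (s + i + 1) = 0"
    by (simp add: s_square i_square two_eq_zero)
  moreover have "s + i \<noteq> 0"
    using i_notin by (simp add: add_eq_0_iff_eq_CHAR_2[OF CHAR_2] s_def subfield_q_def)
  ultimately have "s + (i + 1) = 0"
    by (simp add: add.assoc)
  then show ?thesis
    by (simp add: add_eq_0_iff_eq_CHAR_2[OF CHAR_2] s_def)
qed

lemma frobenius_coords:
  assumes "A \<in> subfield_q m" "B \<in> subfield_q m"
  shows "(A + i * B) ^ 2 ^ m = A + B + i * B"
  using assms CHAR_2
  by (simp add: subfield_q_def frobenius_add_CHAR_2 power_mult_distrib frobenius_i algebra_simps)

lemma coords_add_frobenius:
  assumes "A \<in> subfield_q m" "B \<in> subfield_q m"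
  shows "(A + i * B) + (A + i * B) ^ 2 ^ m = B"
proof -
  have "(A + i * B) + (A + B + i * B) = B + 2 * (A + i * B)"
    by (simp add: algebra_simps)
  then show ?thesis
    using assms by (simp add: frobenius_coords two_eq_zero)
qed

lemma coords_mult_frobenius:
  assumes "A \<in> subfield_q m" "B \<in> subfield_q m"
  shows "(A + i * B) * (A + i * B) ^ 2 ^ m = A ^ 2 + A * B + B ^ 2 * k"
proof -
  have "(A + i * B) * (A + B + i * B)
      = A ^ 2 + A * B + B ^ 2 * k + (i ^ 2 - i - k) * B ^ 2 + 2 * (i * A * B + i * B ^ 2)"
    by (simp add: algebra_simps power2_eq_square)
  then show ?thesis
    using assms by (simp add: frobenius_coords i_square two_eq_zero)
qed

lemma coords_in_subfield_iff:
  assumes "A \<in> subfield_q m" "B \<in> subfield_q m"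
  shows "A + i * B \<in> subfield_q m \<longleftrightarrow> B = 0"
proof -
  have "A + i * B \<in> subfield_q m \<longleftrightarrow> A + B + i * B = A + i * B"
    using frobenius_coords[OF assms] by (simp add: subfield_q_def)
  then show ?thesis
    by (simp add: add.commute add.left_commute)
qed

lemma coords_eq_iff:
  assumes "A \<in> subfield_q m" "B \<in> subfield_q m" "A' \<in> subfield_q m" "B' \<in> subfield_q m"
  shows "A + i * B = A' + i * B' \<longleftrightarrow> A = A' \<and> B = B'"
proof
  assume eq: "A + i * B = A' + i * B'"
  then have "(A + i * B) + B = (A' + i * B') + B'"
    by (metis assms frobenius_coords add.commute add.left_commute)
  with eq have "B = B'"
    by simp
  with eq show "A = A' \<and> B = B'"
    by simp
qed simp


lemma power_pred_coords_iff:
  assumes A: "A \<in> subfield_q m" and B: "B \<in> subfield_q m" and C: "C \<in> subfield_q m"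
    and B_nz: "B \<noteq> 0"
  shows "C + i * B = (A + i * B) ^ (2 ^ m - 1) \<longleftrightarrow> C = A + B + 1 \<and> A ^ 2 + A * B + B ^ 2 * k = B"
proof -
  let ?\<alpha> = "A + i * B"
  txt \<open>Compare coordinates of both sides of \<beta>\<alpha> = \<alpha>^q.\<close>
  have closed: "x + y \<in> subfield_q m" "x * y \<in> subfield_q m"
    if "x \<in> subfield_q m" "y \<in> subfield_q m" for x y :: 'a
    using subfield_q_add[OF CHAR_2 that] subfield_q_mult[OF that] .
  have "?\<alpha> \<noteq> 0"
    using coords_in_subfield_iff[OF A B] B_nz subfield_q_zero by metis
  then have "C + i * B = ?\<alpha> ^ (2 ^ m - 1) \<longleftrightarrow> (C + i * B) * ?\<alpha> = ?\<alpha> ^ 2 ^ m"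
    by (metis mult_cancel_right power_minus_mult zero_less_numeral zero_less_power)
  also have "(C + i * B) * ?\<alpha> = (C * A + B ^ 2 * k) + i * (C * B + A * B + B ^ 2)
      + (i ^ 2 - i - k) * B ^ 2"
    by (simp add: algebra_simps power2_eq_square)
  also have "\<dots> = ?\<alpha> ^ 2 ^ m \<longleftrightarrow> C * A + B ^ 2 * k = A + B \<and> C * B + A * B + B ^ 2 = B"
  proof -
    have "C * A + B ^ 2 * k \<in> subfield_q m" "C * B + A * B + B ^ 2 \<in> subfield_q m"
      "A + B \<in> subfield_q m"
      using A B C k_in by (simp_all add: closed power2_eq_square)
    then show ?thesis
      using B by (simp add: i_square frobenius_coords[OF A B] coords_eq_iff)
  qed
  also have "C * B + A * B + B ^ 2 = B \<longleftrightarrow> (C + (A + B)) * B = 1 * B"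
    by (simp add: algebra_simps power2_eq_square)
  also have "\<dots> \<longleftrightarrow> C = A + B + 1"
    using B_nz by (simp add: eq_diff_eq[symmetric] minus_CHAR_2[OF CHAR_2] add.commute)
  finally show ?thesis
    by (auto simp: algebra_simps power2_eq_square)
qed

lemma abs_trace_inverse_norm:
  assumes A: "A \<in> subfield_q m" and B: "B \<in> subfield_q m" and B_nz: "B \<noteq> 0"
    and norm: "A ^ 2 + A * B + B ^ 2 * k = B"
  shows "abs_trace m (1 / B) = abs_trace m k"
proof -
  define x where "x = A / B"
  have "1 / B = (A ^ 2 + A * B + B ^ 2 * k) / B ^ 2"
    using B_nz by (subst norm) (simp add: power2_eq_square)
  also have "\<dots> = (x ^ 2 + x) + k"
    using B_nz by (simp add: x_def field_simps power2_eq_square)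
  finally have "abs_trace m (1 / B) = abs_trace m (x ^ 2 + x) + abs_trace m k"
    by (simp add: abs_trace_add[OF CHAR_2])
  moreover have "x \<in> subfield_q m"
    using A B by (simp add: x_def subfield_q_divide)
  ultimately show ?thesis
    by (simp add: abs_trace_square_add_self[OF CHAR_2])
qed

lemma abs_trace_one_plus_inverse_norm:
  assumes A: "A \<in> subfield_q m" and B: "B \<in> subfield_q m" and B_nz: "B \<noteq> 0"
    and norm: "A ^ 2 + A * B + B ^ 2 * k = B"
  shows "abs_trace m (1 + 1 / (A + i * B) ^ (2 ^ m + 1)) = of_nat m + abs_trace m k"
proof -
  have "(A + i * B) ^ (2 ^ m + 1) = B"
    using coords_mult_frobenius[OF A B] norm by (simp add: mult.commute)
  then show ?thesis
    using abs_trace_inverse_norm[OF assms]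
    by (simp add: abs_trace_add[OF CHAR_2] abs_trace_one)
qed

end

theorem proposition6:
  fixes m :: nat and k i A B C D :: "'a::{field,finite}"
  assumes card: "card (UNIV :: 'a set) = 2 ^ (2 * m)"
    and m_pos: "m \<ge> 1"
    and k_in: "k \<in> subfield_q m"
    and trk: "abs_trace m k = 1"
    and i_notin: "i \<notin> subfield_q m"
    and i_sq: "i ^ 2 = i + k"
    and ABCD: "A \<in> subfield_q m" "B \<in> subfield_q m" "C \<in> subfield_q m" "D \<in> subfield_q m"
    and nz: "(A + i * B) * (C + i * D) \<noteq> 0"
  shows "(odd m \<and> C = A + B + 1 \<and> D = B \<and> A ^ 2 + A * B + B ^ 2 * k + B = 0 \<and> B \<noteq> 0)
     \<longleftrightarrow>
     (let \<alpha> = A + i * B; \<beta> = C + i * D; q = (2::nat) ^ m in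
        \<beta> = \<alpha> ^ (q - 1) \<and> \<beta> \<notin> subfield_q m
        \<and> abs_trace m (1 + 1 / \<alpha> ^ (q + 1)) = 0
        \<and> \<alpha> + \<alpha> ^ q = \<beta> + \<beta> ^ q)"
proof -
  interpret char2_quadratic_extension m k i
    using CHAR_eq_2_of_card_power_2[OF card] k_in i_notin i_sq by unfold_locales
  have A: "A \<in> subfield_q m" and B: "B \<in> subfield_q m"
    and C: "C \<in> subfield_q m" and D: "D \<in> subfield_q m"
    using ABCD by simp_all
  have trace_eq_iff: "A + i * B + (A + i * B) ^ 2 ^ m = C + i * D + (C + i * D) ^ 2 ^ m \<longleftrightarrow> B = D"
    using A B C D by (simp add: coords_add_frobenius)
  have norm_iff: "A ^ 2 + A * B + B ^ 2 * k + B = 0 \<longleftrightarrow> A ^ 2 + A * B + B ^ 2 * k = B"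
    by (rule add_eq_0_iff_eq_CHAR_2[OF CHAR_2])
  have odd_iff: "abs_trace m (1 + 1 / (A + i * B) ^ (2 ^ m + 1)) = 0 \<longleftrightarrow> odd m"
    if "B \<noteq> 0" "A ^ 2 + A * B + B ^ 2 * k = B"
    using abs_trace_one_plus_inverse_norm[OF A B that] trk
      of_nat_eq_0_iff_char_dvd[where 'a = 'a, of "Suc m"] CHAR_2 by (simp add: add.commute)
  show ?thesis
  proof (cases "D = B \<and> B \<noteq> 0")
    case True
    then show ?thesis
      using power_pred_coords_iff[OF A B C] coords_in_subfield_iff[OF C D] trace_eq_iff
        norm_iff odd_iff by (auto simp: Let_def)
  next
    case False
    then show ?thesis
      using coords_in_subfield_iff[OF C D] trace_eq_iff by (auto simp: Let_def)
  qed
qed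

end
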